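(* Let $\mathbb{F}_q$ be any finite field. Every element of $\operatorname{Mat}_2(\mathbb{F}_q)$ can be written as a sum of two matrices in $\operatorname{SL}_2(\mathbb{F}_q)$.
   Context: $\operatorname{SL}_2(\mathbb{F}_q)$ is the set of $2\times 2$ matrices over $\mathbb{F}_q$ of determinant $1$. *)

theory Defs
  imports "HOL-Analysis.Analysis"
begin

definition SL2 :: "(('a::comm_ring_1)^2^2) set" where
  "SL2 = {A. det A = 1}"

end

theory Submission
  imports Defs
begin

text \<open>The case d \<noteq> 0
is symmetric, and for a = d = 0 the unitriangular A = [[1,0],[c,1]] works.\<close>

lemma exists_det_one_with_det_diff_one:
  fixes M :: "'a::field^2^2"
  shows "\<exists>A. det A = 1 \<and> det (M - A) = 1"
proof -
  define a b c d where "a = M$1$1" and "b = M$1$2" and "c = M$2$1" and "d = M$2$2"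
  have det_diff: "det (M - A) = (a - A$1$1) * (d - A$2$2) - (b - A$1$2) * (c - A$2$1)"
    for A :: "'a^2^2"
    by (simp add: det_2 a_def b_def c_def d_def)
  consider "a \<noteq> 0" | "a = 0" "d \<noteq> 0" | "a = 0" "d = 0"
    by blast
  then show ?thesis
  proof cases
    case 1
    define s where "s = d - (1 + (b - 1) * (c + 1)) / a"
    let ?A = "vector [vector [0, 1], vector [-1, s]] :: 'a^2^2"
    have "det ?A = 1"
      by (simp add: det_2)
    moreover have "det (M - ?A) = 1"
      unfolding det_diff using 1 by (simp add: s_def field_simps)
    ultimately show ?thesis by blast
  next
    case 2
    define p where "p = a - (1 + (b - 1) * (c + 1)) / d"
    let ?A = "vector [vector [p, 1], vector [-1, 0]] :: 'a^2^2"
    have "det ?A = 1"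
      by (simp add: det_2)
    moreover have "det (M - ?A) = 1"
      unfolding det_diff using 2 by (simp add: p_def field_simps)
    ultimately show ?thesis by blast
  next
    case 3
    let ?A = "vector [vector [1, 0], vector [c, 1]] :: 'a^2^2"
    have "det ?A = 1"
      by (simp add: det_2)
    moreover have "det (M - ?A) = 1"
      unfolding det_diff using 3 by simp
    ultimately show ?thesis by blast
  qed
qed

theorem proposition3p9:
  fixes M :: "('a::{field,finite})^2^2"
  shows "\<exists>A B. A \<in> SL2 \<and> B \<in> SL2 \<and> M = A + B"
proof -
  obtain A where "det A = 1" "det (M - A) = 1"
    using exists_det_one_with_det_diff_one by blast
  then have "A \<in> SL2" "M - A \<in> SL2" "M = A + (M - A)"
    by (simp_all add: SL2_def)
  then show ?thesis by blast
qed

end
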